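(* Let $w,x,y,z$ be nodes of a median graph, and let $B=\big((I_{yw}\cap I_{xw})\cup(I_{yw}\cap I_{zw})\big)\setminus\{w\}$. If $B\neq\emptyset$, then a point of $B$ closest to $y$ is whichever of $m(y,x,w)$ and $m(y,z,w)$ is closer to $y$.
   Context: $G$ is a finite connected unweighted undirected median graph: with shortest-path distance $d$ and $I_{ab}=\{v:d(a,v)+d(v,b)=d(a,b)\}$, $\lvert I_{ab}\cap I_{ac}\cap I_{bc}\rvert=1$ for all nodes $a,b,c$, and $m(a,b,c)$ denotes that unique node. (In the paper, $B$ is the set of bargaining points of $y$ when the current winner is $w$ and the other group members are $x,z$.) *)

theory Defs
  imports Main
begin

inductive walk_len :: "('a \<Rightarrow> 'a \<Rightarrow> bool) \<Rightarrow> 'a \<Rightarrow> 'a \<Rightarrow> nat \<Rightarrow> bool"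
  for E :: "'a \<Rightarrow> 'a \<Rightarrow> bool" where
  walk_refl: "walk_len E u u 0"
| walk_step: "E u v \<Longrightarrow> walk_len E v w n \<Longrightarrow> walk_len E u w (Suc n)"

definition gdist :: "('a \<Rightarrow> 'a \<Rightarrow> bool) \<Rightarrow> 'a \<Rightarrow> 'a \<Rightarrow> nat" where
  "gdist E u v = (LEAST n. walk_len E u v n)"

definition interval :: "'a set \<Rightarrow> ('a \<Rightarrow> 'a \<Rightarrow> bool) \<Rightarrow> 'a \<Rightarrow> 'a \<Rightarrow> 'a set" where
  "interval V E a b = {v \<in> V. gdist E a v + gdist E v b = gdist E a b}"

definition connected_graph :: "'a set \<Rightarrow> ('a \<Rightarrow> 'a \<Rightarrow> bool) \<Rightarrow> bool" where
  "connected_graph V E \<longleftrightarrow>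
     finite V \<and> V \<noteq> {} \<and>
     (\<forall>u v. E u v \<longrightarrow> u \<in> V \<and> v \<in> V) \<and>
     (\<forall>u v. E u v \<longrightarrow> E v u) \<and>
     (\<forall>u. \<not> E u u) \<and>
     (\<forall>u\<in>V. \<forall>v\<in>V. \<exists>n. walk_len E u v n)"

definition median_graph :: "'a set \<Rightarrow> ('a \<Rightarrow> 'a \<Rightarrow> bool) \<Rightarrow> bool" where
  "median_graph V E \<longleftrightarrow> connected_graph V E \<and>
     (\<forall>a\<in>V. \<forall>b\<in>V. \<forall>c\<in>V.
        card (interval V E a b \<inter> interval V E a c \<inter> interval V E b c) = 1)"

definition med :: "'a set \<Rightarrow> ('a \<Rightarrow> 'a \<Rightarrow> bool) \<Rightarrow> 'a \<Rightarrow> 'a \<Rightarrow> 'a \<Rightarrow> 'a" where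
  "med V E a b c = (THE v. v \<in> interval V E a b \<inter> interval V E a c \<inter> interval V E b c)"

end

theory Submission
  imports Defs
begin

text \<open>If \<open>b \<in> I(y,w) \<inter> I(x,w)\<close>, the median \<open>m(b,x,y)\<close> also lies in \<open>I(y,w) \<inter> I(x,w)\<close>, so by
  uniqueness it equals \<open>m(y,x,w)\<close>; hence \<open>m(y,x,w)\<close> lies on a geodesic from \<open>y\<close> through \<open>b\<close>
  to \<open>w\<close>. It is therefore at least as close to \<open>y\<close> as \<open>b\<close>, and it differs from \<open>w\<close> when \<open>b\<close>
  does. Applying this to the two medians \<open>m(y,x,w)\<close>, \<open>m(y,z,w)\<close> covers all of \<open>B\<close>.\<close>

lemma walk_len_trans:
  "walk_len E u v n \<Longrightarrow> walk_len E v w m \<Longrightarrow> walk_len E u w (n + m)"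
  by (induction rule: walk_len.induct) (auto intro: walk_len.intros)

lemma walk_len_snoc: "walk_len E u v n \<Longrightarrow> E v w \<Longrightarrow> walk_len E u w (Suc n)"
  using walk_len_trans[of E u v n w 1] by (auto intro: walk_len.intros)

lemma walk_len_sym:
  assumes "\<And>a b. E a b \<Longrightarrow> E b a"
  shows "walk_len E u v n \<Longrightarrow> walk_len E v u n"
  by (induction rule: walk_len.induct) (auto intro: walk_len.intros walk_len_snoc assms)

lemma walk_len_gdist: "walk_len E u v n \<Longrightarrow> walk_len E u v (gdist E u v)"
  unfolding gdist_def by (rule LeastI)

lemma gdist_le: "walk_len E u v n \<Longrightarrow> gdist E u v \<le> n"
  unfolding gdist_def by (rule Least_le)

lemma gdist_self [simp]: "gdist E u u = 0"
  using gdist_le[OF walk_refl[of E u]] by simp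

lemma connected_graph_walk_len_gdist:
  "connected_graph V E \<Longrightarrow> u \<in> V \<Longrightarrow> v \<in> V \<Longrightarrow> walk_len E u v (gdist E u v)"
  unfolding connected_graph_def by (meson walk_len_gdist)

lemma gdist_triangle:
  "connected_graph V E \<Longrightarrow> u \<in> V \<Longrightarrow> v \<in> V \<Longrightarrow> w \<in> V \<Longrightarrow>
     gdist E u w \<le> gdist E u v + gdist E v w"
  by (meson connected_graph_walk_len_gdist gdist_le walk_len_trans)

lemma gdist_commute:
  assumes G: "connected_graph V E" and "u \<in> V" "v \<in> V"
  shows "gdist E u v = gdist E v u"
proof -
  have sym: "\<And>a b. E a b \<Longrightarrow> E b a"
    using G unfolding connected_graph_def by blast
  have "gdist E v u \<le> gdist E u v" if "u \<in> V" "v \<in> V" for u v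
    using gdist_le[OF walk_len_sym[OF sym connected_graph_walk_len_gdist[OF G that]]] .
  with assms show ?thesis by (meson antisym)
qed

lemma gdist_eq_0_iff:
  "connected_graph V E \<Longrightarrow> u \<in> V \<Longrightarrow> v \<in> V \<Longrightarrow> gdist E u v = 0 \<longleftrightarrow> u = v"
  using connected_graph_walk_len_gdist[of V E u v] by (auto elim: walk_len.cases)

lemma interval_commute:
  "connected_graph V E \<Longrightarrow> a \<in> V \<Longrightarrow> b \<in> V \<Longrightarrow> interval V E a b = interval V E b a"
  unfolding interval_def by (auto simp: gdist_commute)

lemma interval_self:
  assumes G: "connected_graph V E" and "a \<in> V"
  shows "interval V E a a = {a}"
proof -
  have "gdist E a v = 0 \<longleftrightarrow> a = v" if "v \<in> V" for v
    using gdist_eq_0_iff[OF G assms(2) that] .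
  then show ?thesis using assms(2) by (auto simp: interval_def)
qed

lemma interval_trans:
  assumes G: "connected_graph V E" and V: "a \<in> V" "c \<in> V"
    and b: "b \<in> interval V E a c" and p: "p \<in> interval V E a b"
  shows "p \<in> interval V E a c" and "b \<in> interval V E p c"
proof -
  have bV: "b \<in> V" and pV: "p \<in> V"
    using b p by (simp_all add: interval_def)
  have "gdist E a b + gdist E b c = gdist E a c" "gdist E a p + gdist E p b = gdist E a b"
    using b p by (simp_all add: interval_def)
  moreover have "gdist E p c \<le> gdist E p b + gdist E b c" "gdist E a c \<le> gdist E a p + gdist E p c"
    using gdist_triangle[OF G pV bV V(2)] gdist_triangle[OF G V(1) pV V(2)] .
  ultimately have "gdist E p c = gdist E p b + gdist E b c" "gdist E a p + gdist E p c = gdist E a c"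
    by linarith+
  then show "p \<in> interval V E a c" "b \<in> interval V E p c"
    unfolding interval_def using pV bV by simp_all
qed

lemma gdist_less_of_mem_interval:
  assumes G: "connected_graph V E" and "b \<in> V"
    and p: "p \<in> interval V E a b" and "p \<noteq> b"
  shows "gdist E a p < gdist E a b"
proof -
  have "p \<in> V" using p by (simp add: interval_def)
  with assms have "gdist E p b \<noteq> 0" by (simp add: gdist_eq_0_iff)
  with p show ?thesis unfolding interval_def by simp
qed

lemma med_mem:
  assumes "median_graph V E" "a \<in> V" "b \<in> V" "c \<in> V"
  shows "med V E a b c \<in> interval V E a b \<inter> interval V E a c \<inter> interval V E b c"
    and "p \<in> interval V E a b \<inter> interval V E a c \<inter> interval V E b c \<Longrightarrow> p = med V E a b c"
proof -
  obtain m where m: "interval V E a b \<inter> interval V E a c \<inter> interval V E b c = {m}"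
    using assms unfolding median_graph_def by (meson card_1_singletonE)
  then have "med V E a b c = m" unfolding med_def by auto
  with m show "med V E a b c \<in> interval V E a b \<inter> interval V E a c \<inter> interval V E b c"
    and "p \<in> interval V E a b \<inter> interval V E a c \<inter> interval V E b c \<Longrightarrow> p = med V E a b c"
    by auto
qed

lemma med_mem_interval_between:
  assumes M: "median_graph V E" and V: "y \<in> V" "x \<in> V" "w \<in> V"
    and b: "b \<in> interval V E y w" "b \<in> interval V E x w"
  shows "med V E y x w \<in> interval V E y b"
proof -
  have G: "connected_graph V E" using M unfolding median_graph_def by blast
  have bV: "b \<in> V" using b(1) by (simp add: interval_def)
  define p where "p = med V E b x y"
  have p: "p \<in> interval V E y b" "p \<in> interval V E x b" "p \<in> interval V E y x"
    using med_mem(1)[OF M bV V(2,1)] interval_commute[OF G] V bV unfolding p_def by auto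
  have "p \<in> interval V E y w" "p \<in> interval V E x w"
    using interval_trans(1)[OF G V(1,3) b(1) p(1)] interval_trans(1)[OF G V(2,3) b(2) p(2)] .
  with p(3) have "p = med V E y x w" by (simp add: med_mem(2)[OF M V])
  with p(1) show ?thesis by simp
qed

lemma med_dominates_interval_point:
  assumes M: "median_graph V E" and V: "y \<in> V" "x \<in> V" "w \<in> V"
    and b: "b \<in> interval V E y w" "b \<in> interval V E x w" "b \<noteq> w"
  shows "med V E y x w \<noteq> w" and "gdist E y (med V E y x w) \<le> gdist E y b"
proof -
  have G: "connected_graph V E" using M unfolding median_graph_def by blast
  let ?m = "med V E y x w"
  have m: "?m \<in> interval V E y b" using med_mem_interval_between[OF M V b(1,2)] .
  then show "gdist E y ?m \<le> gdist E y b" unfolding interval_def by simp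
  have "b \<in> interval V E ?m w" using interval_trans(2)[OF G V(1,3) b(1) m] .
  with b(3) show "?m \<noteq> w"
    using interval_self[OF G V(3)] by force
qed

lemma med_pair_dominates:
  assumes M: "median_graph V E" and V: "w \<in> V" "x \<in> V" "y \<in> V" "z \<in> V"
    and b: "b \<in> (interval V E y w \<inter> interval V E x w \<union> interval V E y w \<inter> interval V E z w) - {w}"
  shows "\<exists>m\<in>{med V E y x w, med V E y z w}.
    m \<in> (interval V E y w \<inter> interval V E x w \<union> interval V E y w \<inter> interval V E z w) - {w} \<and>
    gdist E y m \<le> gdist E y b"
proof -
  have byw: "b \<in> interval V E y w" and bw: "b \<noteq> w" using b by auto
  consider "b \<in> interval V E x w" | "b \<in> interval V E z w" using b by auto
  then show ?thesis
  proof cases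
    case 1
    with med_dominates_interval_point[OF M V(3,2,1) byw 1 bw] med_mem(1)[OF M V(3,2,1)]
    show ?thesis by auto
  next
    case 2
    with med_dominates_interval_point[OF M V(3,4,1) byw 2 bw] med_mem(1)[OF M V(3,4,1)]
    show ?thesis by auto
  qed
qed

theorem lemmaI2:
  fixes V :: "'a set" and E :: "'a \<Rightarrow> 'a \<Rightarrow> bool" and w x y z :: 'a
  assumes "median_graph V E"
    and "w \<in> V" "x \<in> V" "y \<in> V" "z \<in> V"
    and "B = ((interval V E y w \<inter> interval V E x w) \<union>
              (interval V E y w \<inter> interval V E z w)) - {w}"
    and "B \<noteq> {}"
  shows "\<forall>r \<in> {med V E y x w, med V E y z w}.
           gdist E y r \<le> gdist E y (med V E y x w) \<and>
           gdist E y r \<le> gdist E y (med V E y z w) \<longrightarrow>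
           r \<in> B \<and> (\<forall>b\<in>B. gdist E y r \<le> gdist E y b)"
proof (intro ballI impI)
  fix r
  assume r: "r \<in> {med V E y x w, med V E y z w}"
    and r_min: "gdist E y r \<le> gdist E y (med V E y x w) \<and> gdist E y r \<le> gdist E y (med V E y z w)"
  have G: "connected_graph V E" using assms(1) unfolding median_graph_def by blast
  have r_le: "gdist E y r \<le> gdist E y b" if "b \<in> B" for b
    using med_pair_dominates[OF assms(1-5), of b] that r_min assms(6) by auto
  obtain b where "b \<in> B" using assms(7) by auto
  then obtain m where "m \<in> interval V E y w" "m \<noteq> w" "gdist E y r \<le> gdist E y m"
    using med_pair_dominates[OF assms(1-5), of b] r_min assms(6) by auto
  then have "gdist E y r < gdist E y w"
    using gdist_less_of_mem_interval[OF G assms(2)] by fastforce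
  then have "r \<in> B"
    using r med_mem(1)[OF assms(1,4,3,2)] med_mem(1)[OF assms(1,4,5,2)] assms(6) by auto
  with r_le show "r \<in> B \<and> (\<forall>b\<in>B. gdist E y r \<le> gdist E y b)" by simp
qed

end
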